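(* Let $V$ be a finite set of $N \ge 2$ nodes, and let $G_X=(V,E_X)$ and $G_Y=(V,E_Y)$ be connected undirected graphs on $V$ with positive edge weights, with graph Laplacians $L_X$ and $L_Y$ respectively. Let $L_X^+$ and $L_Y^+$ denote their Moore–Penrose pseudoinverses. For distinct $p,q\in V$ let $e_{p,q}=e_p-e_q$, where $e_p\in\mathbb{R}^N$ is the $p$-th standard basis vector, and define the distance mapping distortion $$\gamma^F(p,q)=\frac{e_{p,q}^\top L_Y^+ e_{p,q}}{e_{p,q}^\top L_X^+ e_{p,q}},\qquad \gamma^F_{\min}=\min_{p,q\in V,\;p\neq q}\gamma^F(p,q).$$ Then $$\gamma^F_{\min}\;\ge\;\frac{1}{\lambda_{\max}\bigl(L_X^+ L_Y\bigr)},$$ where $\lambda_{\max}(\cdot)$ denotes the largest eigenvalue.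
   Context: For a weighted undirected graph with (symmetric, nonnegative) weight matrix $W$ and diagonal degree matrix $D$ (with $D_{pp}=\sum_q W_{pq}$), the Laplacian is $L=D-W$. The quantity $e_{p,q}^\top L^+ e_{p,q}$ is the effective-resistance distance between nodes $p$ and $q$. Here $G_X$ and $G_Y$ play the roles of an input manifold graph and an output manifold graph on the same node set (the same samples), and $\gamma^F(p,q)$ is the ratio of output to input effective-resistance distance. *)

theory Defs
  imports "HOL-Analysis.Analysis"
begin

text \<open>Weighted undirected graphs on the finite node type 'n are given by their
weight matrices W (symmetric, nonnegative); the edges are the pairs with positive weight.\<close>

definition weight_matrix :: "real^'n^'n \<Rightarrow> bool" where
  "weight_matrix W \<longleftrightarrow> (\<forall>p q. W $ p $ q = W $ q $ p) \<and> (\<forall>p q. 0 \<le> W $ p $ q)"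

definition graph_connected :: "real^'n^'n \<Rightarrow> bool" where
  "graph_connected W \<longleftrightarrow>
     (\<forall>p q. (p, q) \<in> {(a, b). 0 < W $ a $ b}\<^sup>*)"

definition degree_matrix :: "real^'n^'n \<Rightarrow> real^'n^'n" where
  "degree_matrix W = (\<chi> p q. if p = q then (\<Sum>r\<in>UNIV. W $ p $ r) else 0)"

definition laplacian :: "real^'n^'n \<Rightarrow> real^'n^'n" where
  "laplacian W = degree_matrix W - W"

definition is_pinv :: "real^'n^'n \<Rightarrow> real^'n^'n \<Rightarrow> bool" where
  "is_pinv A X \<longleftrightarrow> A ** X ** A = A \<and> X ** A ** X = X \<and>
     transpose (A ** X) = A ** X \<and> transpose (X ** A) = X ** A"

definition pinv :: "real^'n^'n \<Rightarrow> real^'n^'n" where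
  "pinv A = (THE X. is_pinv A X)"

definition std_basis :: "'n \<Rightarrow> real^'n" where
  "std_basis p = (\<chi> i. if i = p then 1 else 0)"

definition e_diff :: "'n \<Rightarrow> 'n \<Rightarrow> real^'n" where
  "e_diff p q = std_basis p - std_basis q"

definition eff_res :: "real^'n^'n \<Rightarrow> 'n \<Rightarrow> 'n \<Rightarrow> real" where
  "eff_res L p q = e_diff p q \<bullet> (pinv L *v e_diff p q)"

definition gammaF :: "real^'n^'n \<Rightarrow> real^'n^'n \<Rightarrow> 'n \<Rightarrow> 'n \<Rightarrow> real" where
  "gammaF LX LY p q = eff_res LY p q / eff_res LX p q"

definition gammaF_min :: "real^'n^'n \<Rightarrow> real^'n^'n \<Rightarrow> real" where
  "gammaF_min LX LY = Min {gammaF LX LY p q | p q. p \<noteq> q}"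

definition real_eigenvalues :: "real^'n^'n \<Rightarrow> real set" where
  "real_eigenvalues A = {c. \<exists>v. v \<noteq> 0 \<and> A *v v = c *\<^sub>R v}"

definition lambda_max :: "real^'n^'n \<Rightarrow> real" where
  "lambda_max A = Max (real_eigenvalues A)"

end

theory Submission
  imports Defs
begin

(* On the hyperplane orthogonal to the all-ones vector both pseudoinverses L_X^+ and L_Y^+ are
   positive definite, so the generalized Rayleigh quotient y^T L_X^+ y / y^T L_Y^+ y attains a
   maximum mu there.  At a maximizer y0 the first-order condition gives L_X^+ y0 = mu L_Y^+ y0,
   and since L_Y L_Y^+ is the identity on that hyperplane, v = L_Y^+ y0 is an eigenvector of
   L_X^+ L_Y with eigenvalue mu.  Every e_{p,q} lies in the hyperplane, hence
   gamma(p,q) >= 1/mu >= 1/lambda_max(L_X^+ L_Y). *)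

lemma matrix_add_rdistrib: "((A::real^'n^'n) + B) ** C = A ** C + B ** C"
  by (vector matrix_matrix_mult_def sum.distrib[symmetric] field_simps)

lemma matrix_diff_ldistrib: "(A::real^'n^'n) ** (B - C) = A ** B - A ** C"
  by (vector matrix_matrix_mult_def sum_subtractf[symmetric] field_simps)

lemma matrix_diff_rdistrib: "((A::real^'n^'n) - B) ** C = A ** C - B ** C"
  by (vector matrix_matrix_mult_def sum_subtractf[symmetric] field_simps)

lemma transpose_diff: "transpose (A - B) = transpose A - transpose (B::'a::ab_group_add^'n^'m)"
  by (simp add: transpose_def vec_eq_iff)

lemma inner_symmetric_matrix:
  "transpose A = A \<Longrightarrow> x \<bullet> (A *v y) = (A *v x) \<bullet> (y::real^'n)"
  by (metis dot_lmul_matrix transpose_matrix_vector)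

lemma is_pinv_transpose:
  fixes A X :: "real^'n^'n"
  assumes "is_pinv A X"
  shows "is_pinv (transpose A) (transpose X)"
  using assms unfolding is_pinv_def
  by (metis matrix_transpose_mul matrix_mul_assoc transpose_transpose)

lemma is_pinv_left_products_eq:
  fixes A X Y :: "real^'n^'n"
  assumes X: "is_pinv A X" and Y: "is_pinv A Y"
  shows "A ** X = A ** Y"
proof -
  have "A ** X = transpose (A ** X)" using X by (simp add: is_pinv_def)
  also have "\<dots> = transpose X ** transpose (A ** Y ** A)"
    using Y by (simp add: is_pinv_def matrix_transpose_mul)
  also have "\<dots> = transpose (A ** X) ** transpose (A ** Y)"
    by (simp add: matrix_transpose_mul matrix_mul_assoc)
  also have "\<dots> = (A ** X ** A) ** Y" using X Y by (simp add: is_pinv_def matrix_mul_assoc)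
  also have "\<dots> = A ** Y" using X by (simp add: is_pinv_def)
  finally show ?thesis .
qed

lemma is_pinv_unique:
  fixes A X Y :: "real^'n^'n"
  assumes X: "is_pinv A X" and Y: "is_pinv A Y"
  shows "X = Y"
proof -
  have "transpose A ** transpose X = transpose A ** transpose Y"
    using is_pinv_left_products_eq is_pinv_transpose X Y by blast
  then have XA: "X ** A = Y ** A" by (metis matrix_transpose_mul transpose_iff)
  have "X = X ** A ** X" using X by (simp add: is_pinv_def)
  also have "\<dots> = Y ** A ** Y"
    by (metis XA is_pinv_left_products_eq[OF X Y] matrix_mul_assoc)
  also have "\<dots> = Y" using Y by (simp add: is_pinv_def)
  finally show ?thesis .
qed

lemma pinv_eqI: "is_pinv A X \<Longrightarrow> pinv A = (X::real^'n^'n)"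
  unfolding pinv_def by (rule the_equality) (auto intro: is_pinv_unique)

lemma is_pinv_inverse_minus_projection:
  fixes A P K' :: "real^'n^'n"
  assumes K'_right: "(A + P) ** K' = mat 1" and K'_left: "K' ** (A + P) = mat 1"
    and idem: "P ** P = P" and P_sym: "transpose P = P"
    and AP: "A ** P = 0" and PA: "P ** A = 0"
  shows "A ** (K' - P) = mat 1 - P" and "is_pinv A (K' - P)"
proof -
  have K'P: "K' ** P = P"
    by (metis K'_left AP idem matrix_add_rdistrib matrix_mul_assoc matrix_mul_lid add_0)
  have PK': "P ** K' = P"
    by (metis K'_right PA idem matrix_add_ldistrib matrix_mul_assoc matrix_mul_rid add_0)
  have "A ** K' = mat 1 - P ** K'"
    using K'_right by (simp add: matrix_add_rdistrib algebra_simps)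
  then show AX: "A ** (K' - P) = mat 1 - P"
    by (simp add: matrix_diff_ldistrib AP PK')
  have "K' ** A = mat 1 - K' ** P"
    using K'_left by (simp add: matrix_add_ldistrib algebra_simps)
  then have XA: "(K' - P) ** A = mat 1 - P"
    by (simp add: matrix_diff_rdistrib PA K'P)
  have "A ** (K' - P) ** A = A"
    by (simp add: AX matrix_diff_rdistrib PA)
  moreover have "(K' - P) ** A ** (K' - P) = K' - P"
    unfolding XA by (simp add: matrix_diff_rdistrib matrix_diff_ldistrib PK' idem)
  moreover have "transpose (mat 1 - P) = mat 1 - P"
    by (simp add: transpose_diff P_sym)
  ultimately show "is_pinv A (K' - P)"
    by (simp add: is_pinv_def AX XA)
qed

lemma pinv_symmetric:
  fixes A X :: "real^'n^'n"
  assumes "transpose A = A" and "is_pinv A X"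
  shows "transpose (pinv A) = pinv A"
  using pinv_eqI[OF is_pinv_transpose[OF assms(2)]] pinv_eqI[OF assms(2)] assms(1) by simp

lemma is_pinv_mult_eq_0:
  fixes A X :: "real^'n^'n"
  assumes "is_pinv A X" and "transpose A *v v = 0"
  shows "X *v v = 0"
proof -
  have "X = X ** transpose (A ** X)" using assms(1) by (simp add: is_pinv_def matrix_mul_assoc)
  also have "\<dots> = X ** transpose X ** transpose A"
    by (simp add: matrix_transpose_mul matrix_mul_assoc)
  finally show ?thesis using assms(2) by (metis matrix_vector_mul_assoc matrix_vector_mult_0_right)
qed

lemma pos_def_imp_invertible:
  fixes K :: "real^'n^'n"
  assumes "\<And>z. z \<noteq> 0 \<Longrightarrow> 0 < z \<bullet> (K *v z)"
  obtains K' where "K ** K' = mat 1" and "K' ** K = mat 1"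
proof -
  have "\<forall>z. K *v z = 0 \<longrightarrow> z = 0" using assms by force
  then obtain K' where "K' ** K = mat 1" using matrix_left_invertible_ker by blast
  then show thesis using that matrix_left_right_inverse by blast
qed

lemma pos_def_inverse:
  fixes K K' :: "real^'n^'n"
  assumes pos: "\<And>z. z \<noteq> 0 \<Longrightarrow> 0 < z \<bullet> (K *v z)"
    and K': "K ** K' = mat 1" and "y \<noteq> 0"
  shows "0 < y \<bullet> (K' *v y)"
proof -
  define z where "z = K' *v y"
  have y: "y = K *v z" by (simp add: z_def matrix_vector_mul_assoc K')
  then have "z \<noteq> 0" using \<open>y \<noteq> 0\<close> by auto
  have "y \<bullet> (K' *v y) = y \<bullet> z" by (simp add: z_def)
  also have "\<dots> = z \<bullet> (K *v z)" by (simp add: y inner_commute)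
  finally show ?thesis using pos[OF \<open>z \<noteq> 0\<close>] by simp
qed

definition mean_matrix :: "real^'n^'n" where
  "mean_matrix = (\<chi> i j. 1 / real CARD('n))"

lemma mean_matrix_mult_vec:
  "mean_matrix *v x = ((1 \<bullet> x) / real CARD('n)) *\<^sub>R (1::real^'n)"
  by (simp add: mean_matrix_def inner_vec_def matrix_vector_mult_def vec_eq_iff sum_divide_distrib)

lemma mean_matrix_mult_one: "mean_matrix *v 1 = (1::real^'n)"
  by (simp add: mean_matrix_mult_vec inner_vec_def)

lemma transpose_mean_matrix: "transpose mean_matrix = mean_matrix"
  by (simp add: mean_matrix_def transpose_def vec_eq_iff)

lemma mean_matrix_idem: "mean_matrix ** mean_matrix = mean_matrix"
  by (simp add: matrix_eq inner_vec_def mean_matrix_mult_vec mean_matrix_mult_one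
      matrix_vector_mult_scaleR flip: matrix_vector_mul_assoc)

lemma laplacian_mult_vec_nth:
  "(laplacian W *v x) $ p = (\<Sum>r\<in>UNIV. W $ p $ r * (x $ p - x $ r))"
proof -
  have "(laplacian W *v x) $ p = (\<Sum>j\<in>UNIV.
      (if p = j then (\<Sum>r\<in>UNIV. W $ p $ r) else 0) * x $ j - W $ p $ j * x $ j)"
    by (simp add: laplacian_def degree_matrix_def matrix_vector_mult_def algebra_simps)
  also have "\<dots> = (\<Sum>j\<in>UNIV. (if p = j then (\<Sum>r\<in>UNIV. W $ p $ r) * x $ j else 0))
      - (\<Sum>j\<in>UNIV. W $ p $ j * x $ j)"
    by (subst sum_subtractf[symmetric]) (auto intro!: sum.cong)
  also have "\<dots> = (\<Sum>r\<in>UNIV. W $ p $ r) * x $ p - (\<Sum>j\<in>UNIV. W $ p $ j * x $ j)"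
    by simp
  finally show ?thesis
    by (simp add: sum_distrib_left sum_subtractf algebra_simps)
qed

lemma laplacian_mult_one: "laplacian W *v 1 = (0::real^'n)"
  by (simp add: vec_eq_iff laplacian_mult_vec_nth)

lemma transpose_laplacian: "weight_matrix W \<Longrightarrow> transpose (laplacian W) = laplacian W"
  by (auto simp: vec_eq_iff transpose_def laplacian_def degree_matrix_def weight_matrix_def)

lemma laplacian_quadratic_form:
  assumes "weight_matrix W"
  shows "x \<bullet> (laplacian W *v x) = (\<Sum>p\<in>UNIV. \<Sum>r\<in>UNIV. W $ p $ r * (x $ p - x $ r)\<^sup>2) / 2"
proof -
  have W_sym: "W $ p $ r = W $ r $ p" for p r using assms by (simp add: weight_matrix_def)
  define S where "S = (\<Sum>p\<in>UNIV. \<Sum>r\<in>UNIV. W $ p $ r * (x $ p * (x $ p - x $ r)))"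
  have "x \<bullet> (laplacian W *v x) = S"
    by (simp add: S_def inner_vec_def laplacian_mult_vec_nth sum_distrib_left algebra_simps)
  have "S = (\<Sum>p\<in>UNIV. \<Sum>r\<in>UNIV. W $ p $ r * (x $ r * (x $ r - x $ p)))"
    unfolding S_def by (subst sum.swap) (simp add: W_sym)
  then have "2 * S = (\<Sum>p\<in>UNIV. \<Sum>r\<in>UNIV. W $ p $ r * (x $ p * (x $ p - x $ r)))
      + (\<Sum>p\<in>UNIV. \<Sum>r\<in>UNIV. W $ p $ r * (x $ r * (x $ r - x $ p)))"
    unfolding S_def by simp
  also have "\<dots> = (\<Sum>p\<in>UNIV. \<Sum>r\<in>UNIV. W $ p $ r * (x $ p - x $ r)\<^sup>2)"
    by (simp add: sum.distrib[symmetric] power2_eq_square algebra_simps)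
  finally show ?thesis using \<open>x \<bullet> (laplacian W *v x) = S\<close> by simp
qed

lemma laplacian_psd: "weight_matrix W \<Longrightarrow> 0 \<le> x \<bullet> (laplacian W *v x)"
  by (auto simp: laplacian_quadratic_form weight_matrix_def intro!: sum_nonneg)

lemma laplacian_quadratic_form_eq_0_imp_const:
  assumes W: "weight_matrix W" "graph_connected W" and "x \<bullet> (laplacian W *v x) = 0"
  shows "x $ p = x $ q"
proof -
  have nonneg: "0 \<le> W $ p $ r * (x $ p - x $ r)\<^sup>2" for p r
    using W(1) by (simp add: weight_matrix_def)
  have "(\<Sum>p\<in>UNIV. \<Sum>r\<in>UNIV. W $ p $ r * (x $ p - x $ r)\<^sup>2) = 0"
    using assms(3) laplacian_quadratic_form[OF W(1)] by simp
  then have "W $ p $ r * (x $ p - x $ r)\<^sup>2 = 0" for p r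
    by (simp add: sum_nonneg_eq_0_iff sum_nonneg nonneg)
  then have edge: "x $ a = x $ b" if "0 < W $ a $ b" for a b
    using that by (metis mult_eq_0_iff order_less_irrefl power_eq_0_iff right_minus_eq)
  have "(p, q) \<in> {(a, b). 0 < W $ a $ b}\<^sup>*" using W(2) by (simp add: graph_connected_def)
  then show ?thesis by (induction rule: rtrancl_induct) (auto dest: edge)
qed

lemma laplacian_mult_mean_matrix: "laplacian W ** mean_matrix = 0"
  by (simp add: matrix_eq mean_matrix_mult_vec matrix_vector_mult_scaleR laplacian_mult_one
      flip: matrix_vector_mul_assoc)

lemma mean_matrix_mult_laplacian: "weight_matrix W \<Longrightarrow> mean_matrix ** laplacian W = 0"
  by (simp add: matrix_eq mean_matrix_mult_vec inner_symmetric_matrix transpose_laplacian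
      laplacian_mult_one flip: matrix_vector_mul_assoc)

lemma laplacian_plus_mean_matrix_pos_def:
  fixes W :: "real^'n^'n"
  assumes W: "weight_matrix W" "graph_connected W" and "z \<noteq> 0"
  shows "0 < z \<bullet> ((laplacian W + mean_matrix) *v z)"
proof (rule ccontr)
  have form: "z \<bullet> ((laplacian W + mean_matrix) *v z)
      = z \<bullet> (laplacian W *v z) + (1 \<bullet> z)\<^sup>2 / real CARD('n)"
    by (simp add: mean_matrix_mult_vec matrix_vector_mult_add_rdistrib inner_add_right
        power2_eq_square inner_commute)
  assume "\<not> 0 < z \<bullet> ((laplacian W + mean_matrix) *v z)"
  moreover have "0 \<le> z \<bullet> (laplacian W *v z)" using laplacian_psd[OF W(1)] .
  moreover have "0 \<le> (1 \<bullet> z)\<^sup>2 / real CARD('n)" by simp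
  ultimately have "z \<bullet> (laplacian W *v z) = 0" and "(1 \<bullet> z)\<^sup>2 / real CARD('n) = 0"
    unfolding form by linarith+
  then have "z \<bullet> (laplacian W *v z) = 0" and sum_0: "1 \<bullet> z = 0" by simp_all
  then have const: "z $ i = z $ p" for i p
    using laplacian_quadratic_form_eq_0_imp_const[OF W] by blast
  obtain p :: 'n where True by simp
  have z: "z = z $ p *\<^sub>R 1" by (simp add: vec_eq_iff) (metis const)
  have "1 \<bullet> z = z $ p * real CARD('n)" by (subst z) (simp add: inner_vec_def)
  then have "z = 0" using sum_0 z by simp
  with \<open>z \<noteq> 0\<close> show False ..
qed

(* mean_matrix is the orthogonal projection onto the kernel of a connected Laplacian,
   so adding it makes the Laplacian invertible. *)
lemma pinv_laplacian:
  fixes W :: "real^'n^'n"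
  assumes W: "weight_matrix W" "graph_connected W"
  obtains K' where "(laplacian W + mean_matrix) ** K' = mat 1"
    and "pinv (laplacian W) = K' - mean_matrix"
    and "is_pinv (laplacian W) (pinv (laplacian W))"
    and "laplacian W ** pinv (laplacian W) = mat 1 - mean_matrix"
proof -
  obtain K' where K': "(laplacian W + mean_matrix) ** K' = mat 1"
    "K' ** (laplacian W + mean_matrix) = mat 1"
    by (rule pos_def_imp_invertible[OF laplacian_plus_mean_matrix_pos_def[OF W]])
  note X = is_pinv_inverse_minus_projection[OF K' mean_matrix_idem transpose_mean_matrix
      laplacian_mult_mean_matrix mean_matrix_mult_laplacian[OF W(1)]]
  show thesis
  proof (rule that[OF K'(1)])
    show pinv: "pinv (laplacian W) = K' - mean_matrix" using pinv_eqI[OF X(2)] .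
    show "is_pinv (laplacian W) (pinv (laplacian W))" using X(2) by (simp only: pinv)
    show "laplacian W ** pinv (laplacian W) = mat 1 - mean_matrix" using X(1) by (simp only: pinv)
  qed
qed

lemma transpose_pinv_laplacian:
  assumes "weight_matrix W" "graph_connected W"
  shows "transpose (pinv (laplacian W)) = pinv (laplacian W)"
proof -
  have "is_pinv (laplacian W) (pinv (laplacian W))" using pinv_laplacian[OF assms] by blast
  then show ?thesis using pinv_symmetric transpose_laplacian[OF assms(1)] by blast
qed

lemma pinv_laplacian_mult_one:
  assumes "weight_matrix W" "graph_connected W"
  shows "pinv (laplacian W) *v 1 = 0"
proof -
  have "is_pinv (laplacian W) (pinv (laplacian W))" using pinv_laplacian[OF assms] by blast
  then show ?thesis
    by (rule is_pinv_mult_eq_0) (simp add: transpose_laplacian[OF assms(1)] laplacian_mult_one)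
qed

lemma laplacian_mult_pinv_laplacian:
  assumes "weight_matrix W" "graph_connected W" and "1 \<bullet> y = 0"
  shows "laplacian W *v (pinv (laplacian W) *v y) = y"
proof -
  have "laplacian W ** pinv (laplacian W) = mat 1 - mean_matrix"
    using pinv_laplacian[OF assms(1,2)] by blast
  then show ?thesis
    using assms(3)
    by (simp add: matrix_vector_mul_assoc matrix_vector_mult_diff_rdistrib mean_matrix_mult_vec)
qed

lemma pinv_laplacian_pos_def:
  fixes W :: "real^'n^'n"
  assumes W: "weight_matrix W" "graph_connected W" and "1 \<bullet> y = 0" "y \<noteq> 0"
  shows "0 < y \<bullet> (pinv (laplacian W) *v y)"
proof -
  obtain K' where K': "(laplacian W + mean_matrix) ** K' = mat 1"
    and pinv: "pinv (laplacian W) = K' - mean_matrix"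
    using pinv_laplacian[OF W] by blast
  have "y \<bullet> (pinv (laplacian W) *v y) = y \<bullet> (K' *v y)"
    using assms(3) by (simp add: pinv matrix_vector_mult_diff_rdistrib mean_matrix_mult_vec)
  also have "0 < \<dots>"
    using pos_def_inverse[OF laplacian_plus_mean_matrix_pos_def[OF W] K' \<open>y \<noteq> 0\<close>] .
  finally show ?thesis .
qed

lemma quadratic_form_scaleR:
  "(c *\<^sub>R y) \<bullet> ((A::real^'n^'n) *v (c *\<^sub>R y)) = c\<^sup>2 * (y \<bullet> (A *v y))"
  by (simp add: matrix_vector_mult_scaleR power2_eq_square)

lemma continuous_on_quadratic_form: "continuous_on S (\<lambda>y. y \<bullet> ((A::real^'n^'n) *v y))"
  by (intro continuous_on_inner continuous_on_id linear_continuous_on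
      matrix_vector_mul_bounded_linear)

lemma rayleigh_quotient_attains_max:
  fixes A C :: "real^'n^'n"
  assumes S: "subspace S" "y1 \<in> S" "y1 \<noteq> 0"
    and C_pos: "\<And>y. y \<in> S \<Longrightarrow> y \<noteq> 0 \<Longrightarrow> 0 < y \<bullet> (C *v y)"
  obtains \<mu> y0 where "y0 \<in> S" "y0 \<noteq> 0" "y0 \<bullet> (A *v y0) = \<mu> * (y0 \<bullet> (C *v y0))"
    and "\<And>y. y \<in> S \<Longrightarrow> y \<bullet> (A *v y) \<le> \<mu> * (y \<bullet> (C *v y))"
proof -
  define R where "R y = (y \<bullet> (A *v y)) / (y \<bullet> (C *v y))" for y
  define T where "T = S \<inter> sphere 0 1"
  have "compact T"
    unfolding T_def by (intro closed_Int_compact closed_subspace S(1) compact_sphere)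
  moreover have "y1 /\<^sub>R norm y1 \<in> T"
    using S by (simp add: T_def subspace_scale)
  then have "T \<noteq> {}" by blast
  moreover have "continuous_on T R"
    unfolding R_def using C_pos
    by (intro continuous_on_divide continuous_on_quadratic_form) (fastforce simp: T_def)
  ultimately obtain y0 where "y0 \<in> T" and y0_max: "\<And>y. y \<in> T \<Longrightarrow> R y \<le> R y0"
    using continuous_attains_sup by metis
  then have y0: "y0 \<in> S" "y0 \<noteq> 0" by (auto simp: T_def)
  show thesis
  proof (rule that[OF y0, of "R y0"])
    show "y0 \<bullet> (A *v y0) = R y0 * (y0 \<bullet> (C *v y0))"
      using C_pos[OF y0] by (simp add: R_def)
    fix y assume "y \<in> S"
    show "y \<bullet> (A *v y) \<le> R y0 * (y \<bullet> (C *v y))"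
    proof (cases "y = 0")
      case False
      have "R (y /\<^sub>R norm y) = R y"
        unfolding R_def quadratic_form_scaleR using False by simp
      moreover have "y /\<^sub>R norm y \<in> T"
        using \<open>y \<in> S\<close> False by (simp add: T_def subspace_scale[OF S(1)])
      ultimately have "R y \<le> R y0" using y0_max by metis
      then show ?thesis using C_pos[OF \<open>y \<in> S\<close> False] by (simp add: R_def divide_le_eq)
    qed simp
  qed
qed

(* Otherwise moving y0 a little in the direction F y0 would make the form positive. *)
lemma neg_semidef_form_eq_0_imp_kernel:
  fixes F :: "real^'n^'n"
  assumes S: "subspace S" and F_sym: "transpose F = F"
    and neg: "\<And>y. y \<in> S \<Longrightarrow> y \<bullet> (F *v y) \<le> 0"
    and y0: "y0 \<in> S" "y0 \<bullet> (F *v y0) = 0" and Fy0: "F *v y0 \<in> S"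
  shows "F *v y0 = 0"
proof (rule ccontr)
  define h where "h = F *v y0"
  define a where "a = h \<bullet> (F *v h)"
  define b where "b = h \<bullet> h"
  assume "F *v y0 \<noteq> 0"
  then have "0 < b" by (simp add: b_def h_def)
  have "a \<le> 0" using neg Fy0 by (simp add: a_def h_def)
  have expand: "(y0 + t *\<^sub>R h) \<bullet> (F *v (y0 + t *\<^sub>R h)) = 2 * t * b + t\<^sup>2 * a" for t
    using y0(2) inner_symmetric_matrix[OF F_sym, of y0 h]
    by (simp add: a_def b_def h_def power2_eq_square algebra_simps inner_commute)
  define t where "t = b / (1 - a)"
  have "y0 + t *\<^sub>R h \<in> S"
    using S y0(1) Fy0 by (simp add: h_def subspace_add subspace_scale)
  then have "2 * t * b + t\<^sup>2 * a \<le> 0" using neg expand by metis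
  moreover have "2 * t * b + t\<^sup>2 * a = b\<^sup>2 * (2 - a) / (1 - a)\<^sup>2"
    using \<open>a \<le> 0\<close> unfolding t_def
    by (simp add: divide_simps power2_eq_square) (simp add: algebra_simps)
  moreover have "0 < b\<^sup>2 * (2 - a) / (1 - a)\<^sup>2" using \<open>a \<le> 0\<close> \<open>0 < b\<close> by simp
  ultimately show False by simp
qed

lemma generalized_eigenvector_at_max:
  fixes A C :: "real^'n^'n"
  assumes S: "subspace S" "y1 \<in> S" "y1 \<noteq> 0"
    and C_pos: "\<And>y. y \<in> S \<Longrightarrow> y \<noteq> 0 \<Longrightarrow> 0 < y \<bullet> (C *v y)"
    and sym: "transpose A = A" "transpose C = C"
    and invariant: "\<And>y. y \<in> S \<Longrightarrow> A *v y \<in> S" "\<And>y. y \<in> S \<Longrightarrow> C *v y \<in> S"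
  obtains \<mu> y0 where "y0 \<in> S" "y0 \<noteq> 0" "A *v y0 = \<mu> *\<^sub>R (C *v y0)"
    and "\<And>y. y \<in> S \<Longrightarrow> y \<bullet> (A *v y) \<le> \<mu> * (y \<bullet> (C *v y))"
proof -
  obtain \<mu> y0 where y0: "y0 \<in> S" "y0 \<noteq> 0" "y0 \<bullet> (A *v y0) = \<mu> * (y0 \<bullet> (C *v y0))"
    and max: "\<And>y. y \<in> S \<Longrightarrow> y \<bullet> (A *v y) \<le> \<mu> * (y \<bullet> (C *v y))"
    using rayleigh_quotient_attains_max[OF S C_pos] by blast
  define F where "F = A - \<mu> *\<^sub>R C"
  have F_mult: "F *v y = A *v y - \<mu> *\<^sub>R (C *v y)" for y
    by (simp add: F_def matrix_vector_mult_diff_rdistrib scaleR_matrix_vector_assoc)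
  have "F *v y0 = 0"
  proof (rule neg_semidef_form_eq_0_imp_kernel[OF S(1) _ _ y0(1)])
    show "transpose F = F" using sym by (simp add: F_def transpose_diff transpose_scalar)
    show "y \<bullet> (F *v y) \<le> 0" if "y \<in> S" for y
      using max[OF that] by (simp add: F_mult inner_diff_right)
    show "y0 \<bullet> (F *v y0) = 0" using y0(3) by (simp add: F_mult inner_diff_right)
    show "F *v y0 \<in> S"
      using S(1) invariant y0(1) by (simp add: F_mult subspace_diff subspace_scale)
  qed
  then show thesis using that[OF y0(1,2) _ max] by (simp add: F_mult)
qed

lemma eigenvectors_independent:
  fixes M :: "real^'n^'n" and v :: "real \<Rightarrow> real^'n"
  assumes "finite S" and eig: "\<And>c. c \<in> S \<Longrightarrow> M *v v c = c *\<^sub>R v c \<and> v c \<noteq> 0"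
    and "(\<Sum>c\<in>S. a c *\<^sub>R v c) = 0" and "c \<in> S"
  shows "a c = 0"
  using assms
proof (induction S arbitrary: a c rule: finite_induct)
  case empty
  then show ?case by simp
next
  case (insert d S)
  have sum_0: "a d *\<^sub>R v d + (\<Sum>c\<in>S. a c *\<^sub>R v c) = 0"
    using insert.hyps insert.prems(2) by simp
  have sum_S: "(- a d) *\<^sub>R v d = (\<Sum>c\<in>S. a c *\<^sub>R v c)"
    using sum_0 by (simp add: neg_eq_iff_add_eq_0)
  have M_sum: "M *v (\<Sum>c\<in>S. a c *\<^sub>R v c) = (\<Sum>c\<in>S. (a c * c) *\<^sub>R v c)"
    using insert.prems(1)
    by (simp add: linear_sum[OF matrix_vector_mul_linear] matrix_vector_mult_scaleR cong: sum.cong)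
  have "(\<Sum>c\<in>S. (a c * (c - d)) *\<^sub>R v c)
      = M *v (\<Sum>c\<in>S. a c *\<^sub>R v c) - d *\<^sub>R (\<Sum>c\<in>S. a c *\<^sub>R v c)"
    by (simp add: M_sum scaleR_sum_right sum_subtractf[symmetric] algebra_simps)
  also have "\<dots> = M *v (- a d *\<^sub>R v d) - d *\<^sub>R (- a d *\<^sub>R v d)"
    by (simp only: sum_S)
  also have "\<dots> = (- a d) *\<^sub>R (M *v v d - d *\<^sub>R v d)"
    by (simp only: matrix_vector_mult_scaleR scaleR_right_diff_distrib scaleR_scaleR mult.commute)
  also have "\<dots> = 0" using insert.prems(1) by simp
  finally have "a c * (c - d) = 0" if "c \<in> S" for c
    using insert.IH[of "\<lambda>c. a c * (c - d)"] insert.prems(1) that by simp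
  then have a_S: "a c = 0" if "c \<in> S" for c
    using that insert.hyps(2) by auto
  then have "a d *\<^sub>R v d = 0" using sum_0 by simp
  then have "a d = 0" using insert.prems(1) by simp
  with a_S show ?case using insert.prems(3) by blast
qed

lemma finite_real_eigenvalues: "finite (real_eigenvalues (M::real^'n^'n))"
proof (rule ccontr)
  assume "infinite (real_eigenvalues M)"
  then obtain S where S: "finite S" "card S = Suc CARD('n)" "S \<subseteq> real_eigenvalues M"
    using infinite_arbitrarily_large by blast
  obtain v where eig: "\<And>c. c \<in> S \<Longrightarrow> M *v v c = c *\<^sub>R v c \<and> v c \<noteq> 0"
    using S(3) unfolding real_eigenvalues_def subset_iff mem_Collect_eq by metis
  have inj: "inj_on v S"
  proof (rule inj_onI)
    fix c d assume "c \<in> S" "d \<in> S" "v c = v d"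
    then have "(c - d) *\<^sub>R v c = 0" using eig by (metis scaleR_left_diff_distrib right_minus_eq)
    then show "c = d" using eig[OF \<open>c \<in> S\<close>] by simp
  qed
  have indep: "independent (v ` S)"
  proof (rule ccontr)
    assume "\<not> independent (v ` S)"
    then obtain u where u: "(\<Sum>w\<in>v ` S. u w *\<^sub>R w) = 0" "\<exists>w\<in>v ` S. u w \<noteq> 0"
      using S(1) by (auto simp: dependent_finite)
    have "(\<Sum>c\<in>S. u (v c) *\<^sub>R v c) = 0" using u(1) by (simp add: sum.reindex[OF inj])
    then have "u (v c) = 0" if "c \<in> S" for c
      using eigenvectors_independent[of S M v "\<lambda>c. u (v c)"] S(1) eig that by blast
    with u(2) show False by blast
  qed
  have "card (v ` S) \<le> CARD('n)"
    using independent_bound[OF indep] by simp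
  with S(2) card_image[OF inj] show False by simp
qed

lemma inner_one_e_diff: "1 \<bullet> e_diff p q = 0"
  by (simp add: inner_vec_def e_diff_def std_basis_def sum_subtractf)

lemma e_diff_nonzero: "p \<noteq> q \<Longrightarrow> e_diff p q \<noteq> 0"
  by (auto simp: e_diff_def std_basis_def vec_eq_iff)

lemma eff_res_laplacian_pos:
  assumes "weight_matrix W" "graph_connected W" and "p \<noteq> q"
  shows "0 < eff_res (laplacian W) p q"
  unfolding eff_res_def
  using pinv_laplacian_pos_def[OF assms(1,2) inner_one_e_diff e_diff_nonzero[OF assms(3)]] .

lemma pinv_laplacian_mult_orthogonal_one:
  assumes "weight_matrix W" "graph_connected W" and "1 \<bullet> y = 0"
  shows "1 \<bullet> (pinv (laplacian W) *v y) = 0"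
  using assms by (simp add: inner_symmetric_matrix transpose_pinv_laplacian pinv_laplacian_mult_one)

lemma eff_res_ratio_eigenvalue:
  fixes WX WY :: "real^'n^'n"
  assumes "p0 \<noteq> (q0::'n)"
    and X: "weight_matrix WX" "graph_connected WX" and Y: "weight_matrix WY" "graph_connected WY"
  obtains \<mu> where "\<mu> \<in> real_eigenvalues (pinv (laplacian WX) ** laplacian WY)" and "0 < \<mu>"
    and "\<And>p q. eff_res (laplacian WX) p q \<le> \<mu> * eff_res (laplacian WY) p q"
proof -
  define S where "S = {y::real^'n. 1 \<bullet> y = 0}"
  obtain \<mu> y0 where y0: "y0 \<in> S" "y0 \<noteq> 0"
    and eigen: "pinv (laplacian WX) *v y0 = \<mu> *\<^sub>R (pinv (laplacian WY) *v y0)"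
    and max: "\<And>y. y \<in> S \<Longrightarrow>
      y \<bullet> (pinv (laplacian WX) *v y) \<le> \<mu> * (y \<bullet> (pinv (laplacian WY) *v y))"
  proof (rule generalized_eigenvector_at_max)
    show "subspace S" unfolding S_def by (rule subspace_hyperplane)
    show "e_diff p0 q0 \<in> S" "e_diff p0 q0 \<noteq> 0"
      using assms(1) by (simp_all add: S_def inner_one_e_diff e_diff_nonzero)
  qed (use X Y in \<open>auto simp: S_def pinv_laplacian_pos_def transpose_pinv_laplacian
      pinv_laplacian_mult_orthogonal_one\<close>)
  define v where "v = pinv (laplacian WY) *v y0"
  have y0_pos: "0 < y0 \<bullet> v" "0 < y0 \<bullet> (pinv (laplacian WX) *v y0)"
    using y0 X Y by (simp_all add: S_def v_def pinv_laplacian_pos_def)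
  show thesis
  proof (rule that)
    have "(pinv (laplacian WX) ** laplacian WY) *v v = \<mu> *\<^sub>R v"
      using y0(1) Y eigen
      by (simp add: S_def v_def laplacian_mult_pinv_laplacian flip: matrix_vector_mul_assoc)
    moreover have "v \<noteq> 0" using y0_pos(1) by auto
    ultimately show "\<mu> \<in> real_eigenvalues (pinv (laplacian WX) ** laplacian WY)"
      by (auto simp: real_eigenvalues_def)
    show "0 < \<mu>"
      using y0_pos eigen by (simp add: v_def zero_less_mult_iff)
    show "eff_res (laplacian WX) p q \<le> \<mu> * eff_res (laplacian WY) p q" for p q
      using max by (simp add: S_def eff_res_def inner_one_e_diff)
  qed
qed

theorem theorem3:
  fixes WX WY :: "real^'n^'n"
  assumes "CARD('n) \<ge> 2"
    and "weight_matrix WX" and "weight_matrix WY"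
    and "graph_connected WX" and "graph_connected WY"
  shows "gammaF_min (laplacian WX) (laplacian WY)
           \<ge> 1 / lambda_max (pinv (laplacian WX) ** laplacian WY)"
proof -
  obtain p0 q0 :: 'n where "p0 \<noteq> q0"
    using assms(1) card_le_Suc0_iff_eq[of "UNIV :: 'n set"] by fastforce
  obtain \<mu> where eig: "\<mu> \<in> real_eigenvalues (pinv (laplacian WX) ** laplacian WY)"
    and "0 < \<mu>" and ratio: "\<And>p q. eff_res (laplacian WX) p q \<le> \<mu> * eff_res (laplacian WY) p q"
    using eff_res_ratio_eigenvalue[OF \<open>p0 \<noteq> q0\<close> assms(2,4,3,5)] by blast
  have "\<mu> \<le> lambda_max (pinv (laplacian WX) ** laplacian WY)"
    unfolding lambda_max_def using finite_real_eigenvalues eig by (rule Max_ge)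
  then have "1 / lambda_max (pinv (laplacian WX) ** laplacian WY) \<le> 1 / \<mu>"
    using \<open>0 < \<mu>\<close> by (simp add: frac_le)
  moreover have "1 / \<mu> \<le> gammaF (laplacian WX) (laplacian WY) p q" if "p \<noteq> q" for p q
    using ratio[of p q] \<open>0 < \<mu>\<close> eff_res_laplacian_pos[OF assms(2,4) that]
    by (simp add: gammaF_def field_simps)
  moreover have "finite {gammaF (laplacian WX) (laplacian WY) p q | p q. p \<noteq> q}"
    by (rule finite_subset[of _ "range (\<lambda>(p, q). gammaF (laplacian WX) (laplacian WY) p q)"]) auto
  moreover have "{gammaF (laplacian WX) (laplacian WY) p q | p q. p \<noteq> q} \<noteq> {}"
    using \<open>p0 \<noteq> q0\<close> by blast
  ultimately show ?thesis
    unfolding gammaF_min_def by (auto intro: order_trans)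
qed

end
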